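(* Let $G$ be a graph and let $K$ be a cut-set of the complement $\overline{G}$. Then for every induced subgraph $H$ of $G$, \[\chi(G) \leq \frac{1}{2} \left(\omega(G) + \Delta(G) + 1 \right) + \frac{4\chi(G[K]) + 3\chi(H \smallsetminus K) - |H \smallsetminus K|}{4}.\]
   Context: All graphs are finite and simple with non-empty vertex set. $|G|$ denotes the number of vertices, $\chi$ the chromatic number, $\omega$ the clique number, $\Delta$ the maximum degree. $\overline{G}$ is the complement of $G$. A cut-set of $\overline{G}$ is a set $K$ of vertices such that $\overline{G} - K$ is disconnected. $G[K]$ is the subgraph of $G$ induced by $K$, and $H \smallsetminus K$ is the subgraph of $G$ induced by $V(H)\setminus K$. By convention a graph on the empty vertex set has chromatic number $0$ and $0$ vertices. *)

theory Defs
  imports Complex_Main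
begin

text \<open>Graph invariants of
induced subgraphs are computed on a vertex subset S with E restricted to S.\<close>

definition simple_graph :: "'a set \<Rightarrow> ('a \<Rightarrow> 'a \<Rightarrow> bool) \<Rightarrow> bool" where
  "simple_graph V E \<longleftrightarrow> finite V \<and> V \<noteq> {} \<and>
     (\<forall>u v. E u v \<longrightarrow> u \<in> V \<and> v \<in> V) \<and>
     (\<forall>u v. E u v \<longrightarrow> E v u) \<and> (\<forall>v. \<not> E v v)"

definition proper_colouring :: "'a set \<Rightarrow> ('a \<Rightarrow> 'a \<Rightarrow> bool) \<Rightarrow> nat \<Rightarrow> ('a \<Rightarrow> nat) \<Rightarrow> bool" where
  "proper_colouring S E k c \<longleftrightarrow>
     (\<forall>v\<in>S. c v < k) \<and> (\<forall>u\<in>S. \<forall>v\<in>S. E u v \<longrightarrow> c u \<noteq> c v)"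

definition chromatic_number :: "'a set \<Rightarrow> ('a \<Rightarrow> 'a \<Rightarrow> bool) \<Rightarrow> nat" where
  "chromatic_number S E = (LEAST k. \<exists>c. proper_colouring S E k c)"

definition clique_number :: "'a set \<Rightarrow> ('a \<Rightarrow> 'a \<Rightarrow> bool) \<Rightarrow> nat" where
  "clique_number S E =
     Max {card C | C. C \<subseteq> S \<and> (\<forall>u\<in>C. \<forall>v\<in>C. u \<noteq> v \<longrightarrow> E u v)}"

definition max_degree :: "'a set \<Rightarrow> ('a \<Rightarrow> 'a \<Rightarrow> bool) \<Rightarrow> nat" where
  "max_degree S E = Max ((\<lambda>v. card {u \<in> S. E v u}) ` S)"

definition complement :: "'a set \<Rightarrow> ('a \<Rightarrow> 'a \<Rightarrow> bool) \<Rightarrow> 'a \<Rightarrow> 'a \<Rightarrow> bool" where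
  "complement V E u v \<longleftrightarrow> u \<in> V \<and> v \<in> V \<and> u \<noteq> v \<and> \<not> E u v"

definition disconnected :: "'a set \<Rightarrow> ('a \<Rightarrow> 'a \<Rightarrow> bool) \<Rightarrow> bool" where
  "disconnected S E \<longleftrightarrow> (\<exists>A B. A \<noteq> {} \<and> B \<noteq> {} \<and> A \<union> B = S \<and> A \<inter> B = {} \<and>
      (\<forall>a\<in>A. \<forall>b\<in>B. \<not> E a b))"

definition cut_set :: "'a set \<Rightarrow> ('a \<Rightarrow> 'a \<Rightarrow> bool) \<Rightarrow> 'a set \<Rightarrow> bool" where
  "cut_set V E K \<longleftrightarrow> K \<subseteq> V \<and> disconnected (V - K) E"

end

(* Removing the cut-set K of the complement leaves two parts A and B such that every vertex
   of A is adjacent to every vertex of B. For a part X with maximum degree d and any S within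
   X one shows 4 chi(X) <= 2 omega(X) + |X| + d + 1 + 3 chi(S) - |S| by induction: while S is
   nonempty, delete a maximal independent set containing a colour class of S, which lowers d
   by one; once S is empty, an independent triple can take its place. What remains are graphs
   of independence number at most 2, where chi(X) <= |X| - nu for the matching number nu of
   the complement, and 3|X| <= 4 nu + 2 omega(X) + d + 1 follows by induction from Gallai's
   lemma. Inside A the degrees are smaller by |B| and vice versa, so adding the two bounds
   gives the theorem. *)

theory Submission
  imports Defs
begin

definition independent :: "'a set \<Rightarrow> ('a \<Rightarrow> 'a \<Rightarrow> bool) \<Rightarrow> bool" where
  "independent I E \<longleftrightarrow> (\<forall>x\<in>I. \<forall>y\<in>I. \<not> E x y)"

definition clique :: "'a set \<Rightarrow> ('a \<Rightarrow> 'a \<Rightarrow> bool) \<Rightarrow> bool" where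
  "clique C E \<longleftrightarrow> (\<forall>u\<in>C. \<forall>v\<in>C. u \<noteq> v \<longrightarrow> E u v)"

definition degree :: "'a set \<Rightarrow> ('a \<Rightarrow> 'a \<Rightarrow> bool) \<Rightarrow> 'a \<Rightarrow> nat" where
  "degree S E v = card {u\<in>S. E v u}"

lemma max_degree_eq: "max_degree S E = Max (degree S E ` S)"
  by (simp add: max_degree_def degree_def)

lemma chromatic_number_le:
  "proper_colouring S E k c \<Longrightarrow> chromatic_number S E \<le> k"
  unfolding chromatic_number_def by (rule Least_le) blast

lemma proper_colouring_subset:
  "proper_colouring S E k c \<Longrightarrow> T \<subseteq> S \<Longrightarrow> proper_colouring T E k c"
  unfolding proper_colouring_def by blast

lemma chromatic_number_empty: "chromatic_number {} E = 0"
  using chromatic_number_le[of "{}" E 0] by (simp add: proper_colouring_def)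

lemma chromatic_number_independent: "independent I E \<Longrightarrow> chromatic_number I E \<le> 1"
  by (rule chromatic_number_le[where c = "\<lambda>_. 0"])
    (auto simp: proper_colouring_def independent_def)

lemma chromatic_number_le_card_image:
  assumes "finite S" "proper_colouring S E k c"
  shows "chromatic_number S E \<le> card (c ` S)"
proof -
  obtain h where h: "bij_betw h (c ` S) {0..<card (c ` S)}"
    using ex_bij_betw_finite_nat assms(1) by blast
  have "proper_colouring S E (card (c ` S)) (h \<circ> c)"
    unfolding proper_colouring_def
  proof (intro conjI ballI impI)
    fix v assume "v \<in> S"
    then show "(h \<circ> c) v < card (c ` S)" using h by (auto simp: bij_betw_def)
  next
    fix u v assume "u \<in> S" "v \<in> S" "E u v"
    then have "c u \<noteq> c v" using assms(2) unfolding proper_colouring_def by blast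
    then show "(h \<circ> c) u \<noteq> (h \<circ> c) v"
      using h \<open>u \<in> S\<close> \<open>v \<in> S\<close> by (auto simp: bij_betw_def inj_on_def)
  qed
  then show ?thesis by (rule chromatic_number_le)
qed

lemma clique_number_eq: "clique_number S E = Max {card C |C. C \<subseteq> S \<and> clique C E}"
  by (simp add: clique_number_def clique_def)

lemma finite_clique_sizes: "finite S \<Longrightarrow> finite {card C |C. C \<subseteq> S \<and> clique C E}"
  by (rule finite_subset[of _ "card ` Pow S"]) auto

lemma clique_number_ge:
  assumes "finite S" "C \<subseteq> S" "clique C E"
  shows "card C \<le> clique_number S E"
  unfolding clique_number_eq using assms by (intro Max_ge finite_clique_sizes) auto

lemma clique_number_attained:
  assumes "finite S"
  obtains C where "C \<subseteq> S" "clique C E" "card C = clique_number S E"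
proof -
  have "card {} \<in> {card C |C. C \<subseteq> S \<and> clique C E}"
    by (auto simp: clique_def intro!: exI[of _ "{}"])
  then have "clique_number S E \<in> {card C |C. C \<subseteq> S \<and> clique C E}"
    unfolding clique_number_eq using finite_clique_sizes[OF assms] by (intro Max_in) auto
  then show ?thesis using that by auto
qed

lemma clique_number_mono:
  assumes "finite S" "T \<subseteq> S"
  shows "clique_number T E \<le> clique_number S E"
proof -
  obtain C where "C \<subseteq> T" "clique C E" "card C = clique_number T E"
    using clique_number_attained[of T E] assms finite_subset by blast
  then show ?thesis using clique_number_ge[OF assms(1), of C E] assms(2) by simp
qed

lemma degree_mono: "finite X \<Longrightarrow> Y \<subseteq> X \<Longrightarrow> degree Y E x \<le> degree X E x"
  unfolding degree_def by (intro card_mono) auto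

lemma degree_le_max_degree: "finite X \<Longrightarrow> v \<in> X \<Longrightarrow> degree X E v \<le> max_degree X E"
  unfolding max_degree_eq by simp

lemma max_degree_attained:
  assumes "finite X" "X \<noteq> {}"
  obtains v where "v \<in> X" "max_degree X E = degree X E v"
proof -
  have "max_degree X E \<in> degree X E ` X"
    unfolding max_degree_eq using assms by (intro Max_in) auto
  then show ?thesis using that by auto
qed

lemma max_degree_mono:
  assumes "finite X" "Y \<subseteq> X" "Y \<noteq> {}"
  shows "max_degree Y E \<le> max_degree X E"
proof -
  obtain v where "v \<in> Y" "max_degree Y E = degree Y E v"
    using max_degree_attained[of Y E] assms finite_subset by blast
  then show ?thesis
    using degree_mono[OF assms(1,2), of E v] degree_le_max_degree[OF assms(1), of v E] assms(2)
    by auto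
qed

lemma degree_join:
  assumes "finite X" "A \<subseteq> X" "B \<subseteq> X" "A \<inter> B = {}" "\<forall>y\<in>B. E x y"
  shows "degree A E x + card B \<le> degree X E x"
proof -
  have "card {u\<in>A. E x u} + card B = card ({u\<in>A. E x u} \<union> B)"
    using assms by (intro card_Un_disjoint[symmetric]) (auto intro: finite_subset)
  also have "\<dots> \<le> card {u\<in>X. E x u}"
    using assms by (intro card_mono) auto
  finally show ?thesis unfolding degree_def .
qed

lemma max_degree_join:
  assumes "finite X" "A \<subseteq> X" "B \<subseteq> X" "A \<inter> B = {}" "A \<noteq> {}" "\<forall>a\<in>A. \<forall>b\<in>B. E a b"
  shows "max_degree A E + card B \<le> max_degree X E"
proof -
  obtain a where "a \<in> A" "max_degree A E = degree A E a"
    using max_degree_attained[of A E] assms finite_subset by blast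
  then show ?thesis
    using degree_join[OF assms(1-4), of E a] degree_le_max_degree[OF assms(1), of a E] assms(2,6)
    by auto
qed

lemma degree_Diff_neighbour:
  assumes "finite X" "I \<subseteq> X" "y \<in> I" "E x y"
  shows "degree (X - I) E x + 1 \<le> degree X E x"
  using degree_join[OF assms(1), of "X - I" "{y}" E x] assms by auto

lemma clique_number_pos: "finite S \<Longrightarrow> v \<in> S \<Longrightarrow> 1 \<le> clique_number S E"
  using clique_number_ge[of S "{v}" E] by (simp add: clique_def)

lemma complement_not_connected_split:
  assumes "a \<in> X" "b \<in> X" "\<not> (complement X E)\<^sup>*\<^sup>* a b"
  obtains A B where "A \<noteq> {}" "B \<noteq> {}" "A \<union> B = X" "A \<inter> B = {}" "\<forall>x\<in>A. \<forall>y\<in>B. E x y"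
proof
  let ?A = "{x\<in>X. (complement X E)\<^sup>*\<^sup>* a x}"
  show "?A \<noteq> {}" "X - ?A \<noteq> {}" using assms by auto
  show "?A \<union> (X - ?A) = X" "?A \<inter> (X - ?A) = {}" by auto
  show "\<forall>x\<in>?A. \<forall>y\<in>X - ?A. E x y"
  proof (intro ballI)
    fix x y assume x: "x \<in> ?A" and y: "y \<in> X - ?A"
    then have "\<not> complement X E x y" by (auto intro: rtranclp.rtrancl_into_rtrancl)
    then show "E x y" using x y unfolding complement_def by auto
  qed
qed

locale undirected =
  fixes E :: "'a \<Rightarrow> 'a \<Rightarrow> bool"
  assumes irreflexive: "\<not> E v v" and symmetric: "E u v \<Longrightarrow> E v u"
begin

lemma proper_colouring_card:
  assumes "finite S"
  shows "\<exists>c. proper_colouring S E (card S) c"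
proof -
  obtain h where h: "bij_betw h S {0..<card S}" using ex_bij_betw_finite_nat[OF assms] by blast
  have "proper_colouring S E (card S) h"
    unfolding proper_colouring_def
  proof (intro conjI ballI impI)
    fix v assume "v \<in> S" then show "h v < card S" using h by (auto simp: bij_betw_def)
  next
    fix u v assume "u \<in> S" "v \<in> S" "E u v"
    then have "u \<noteq> v" using irreflexive by auto
    then show "h u \<noteq> h v" using h \<open>u \<in> S\<close> \<open>v \<in> S\<close> by (auto simp: bij_betw_def inj_on_def)
  qed
  then show ?thesis by blast
qed

lemma chromatic_number_le_card: "finite S \<Longrightarrow> chromatic_number S E \<le> card S"
  using proper_colouring_card chromatic_number_le by blast

lemma proper_colouring_chromatic_number:
  assumes "finite S"
  obtains c where "proper_colouring S E (chromatic_number S E) c"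
proof -
  have "\<exists>k c. proper_colouring S E k c" using proper_colouring_card[OF assms] by blast
  then have "\<exists>c. proper_colouring S E (chromatic_number S E) c"
    unfolding chromatic_number_def by (rule LeastI_ex)
  then show ?thesis using that by blast
qed

lemma chromatic_number_mono:
  "finite S \<Longrightarrow> T \<subseteq> S \<Longrightarrow> chromatic_number T E \<le> chromatic_number S E"
  by (metis proper_colouring_chromatic_number proper_colouring_subset chromatic_number_le)

lemma chromatic_number_Un:
  assumes "finite A" "finite B"
  shows "chromatic_number (A \<union> B) E \<le> chromatic_number A E + chromatic_number B E"
proof -
  obtain a where a: "proper_colouring A E (chromatic_number A E) a"
    using proper_colouring_chromatic_number[OF assms(1)] .
  obtain b where b: "proper_colouring B E (chromatic_number B E) b"
    using proper_colouring_chromatic_number[OF assms(2)] .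
  have "proper_colouring (A \<union> B) E (chromatic_number A E + chromatic_number B E)
      (\<lambda>x. if x \<in> A then a x else chromatic_number A E + b x)"
    using a b unfolding proper_colouring_def by auto
  then show ?thesis by (rule chromatic_number_le)
qed

lemma chromatic_number_Diff_independent:
  assumes "finite X" "independent I E"
  shows "chromatic_number X E \<le> chromatic_number (X - I) E + 1"
proof -
  have "chromatic_number X E = chromatic_number ((X - I) \<union> (X \<inter> I)) E"
    by (simp add: Un_Diff_Int)
  also have "\<dots> \<le> chromatic_number (X - I) E + chromatic_number (X \<inter> I) E"
    using assms by (intro chromatic_number_Un) auto
  also have "chromatic_number (X \<inter> I) E \<le> 1"
    using assms(2) by (intro chromatic_number_independent) (auto simp: independent_def)
  finally show ?thesis by simp
qed

lemma chromatic_number_join: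
  assumes "finite A" "finite B" "\<forall>a\<in>A. \<forall>b\<in>B. E a b"
  shows "chromatic_number A E + chromatic_number B E \<le> chromatic_number (A \<union> B) E"
proof -
  obtain c where c: "proper_colouring (A \<union> B) E (chromatic_number (A \<union> B) E) c"
    using proper_colouring_chromatic_number assms by blast
  have "chromatic_number A E \<le> card (c ` A)" "chromatic_number B E \<le> card (c ` B)"
    using chromatic_number_le_card_image assms(1,2) proper_colouring_subset[OF c] by blast+
  then have "chromatic_number A E + chromatic_number B E \<le> card (c ` A) + card (c ` B)"
    by (rule add_le_mono)
  also have "\<dots> = card (c ` A \<union> c ` B)"
    using c assms unfolding proper_colouring_def by (intro card_Un_disjoint[symmetric]) fastforce+
  also have "\<dots> \<le> chromatic_number (A \<union> B) E"
    using c unfolding proper_colouring_def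
    by (intro card_mono[of "{0..<chromatic_number (A \<union> B) E}", simplified]) auto
  finally show ?thesis .
qed

lemma chromatic_number_remove_colour_class:
  assumes "finite S" "S \<noteq> {}"
  obtains C where "C \<subseteq> S" "C \<noteq> {}" "independent C E"
    "chromatic_number (S - C) E + 1 \<le> chromatic_number S E"
proof -
  obtain c where c: "proper_colouring S E (chromatic_number S E) c"
    using proper_colouring_chromatic_number[OF assms(1)] .
  obtain s where s: "s \<in> S" using assms(2) by blast
  define C where "C = {x\<in>S. c x = c s}"
  have ind: "independent C E"
    unfolding independent_def
  proof (intro ballI notI)
    fix x y assume xy: "x \<in> C" "y \<in> C" "E x y"
    then have "c x \<noteq> c y" using c unfolding C_def proper_colouring_def by blast
    then show False using xy unfolding C_def by simp
  qed
  have colour_less: "c x < chromatic_number S E" if "x \<in> S" for x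
    using c that unfolding proper_colouring_def by blast
  have "proper_colouring (S - C) E (chromatic_number S E - 1)
      (\<lambda>x. if c s < c x then c x - 1 else c x)"
    unfolding proper_colouring_def
  proof (intro conjI ballI impI)
    fix v assume "v \<in> S - C"
    then show "(if c s < c v then c v - 1 else c v) < chromatic_number S E - 1"
      using colour_less[of v] colour_less[OF s] unfolding C_def by auto
  next
    fix u v assume uv: "u \<in> S - C" "v \<in> S - C" "E u v"
    then have "c u \<noteq> c v" using c unfolding proper_colouring_def by blast
    then show "(if c s < c u then c u - 1 else c u) \<noteq> (if c s < c v then c v - 1 else c v)"
      using uv unfolding C_def by auto
  qed
  then have "chromatic_number (S - C) E \<le> chromatic_number S E - 1"
    by (rule chromatic_number_le)
  with colour_less[OF s] have "chromatic_number (S - C) E + 1 \<le> chromatic_number S E"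
    by linarith
  moreover have "s \<in> C" "C \<subseteq> S" using s unfolding C_def by auto
  ultimately show ?thesis using that ind by blast
qed

lemma clique_number_join:
  assumes "finite A" "finite B" "A \<inter> B = {}" "\<forall>a\<in>A. \<forall>b\<in>B. E a b"
  shows "clique_number A E + clique_number B E \<le> clique_number (A \<union> B) E"
proof -
  obtain C where C: "C \<subseteq> A" "clique C E" "card C = clique_number A E"
    using clique_number_attained[OF assms(1)] .
  obtain D where D: "D \<subseteq> B" "clique D E" "card D = clique_number B E"
    using clique_number_attained[OF assms(2)] .
  have "clique (C \<union> D) E" using C D assms(4) symmetric unfolding clique_def by blast
  moreover have "card (C \<union> D) = card C + card D"
    using C D assms by (intro card_Un_disjoint) (auto intro: finite_subset)
  ultimately show ?thesis
    using clique_number_ge[of "A \<union> B" "C \<union> D"] C D assms by auto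
qed

lemma card_eq_degree_nonneighbours:
  assumes "finite X" "v \<in> X"
  shows "card X = 1 + degree X E v + card {u\<in>X. u \<noteq> v \<and> \<not> E v u}"
proof -
  define N where "N = {u\<in>X. E v u}"
  define M where "M = {u\<in>X. u \<noteq> v \<and> \<not> E v u}"
  have "X = insert v (N \<union> M)" using assms unfolding N_def M_def by auto
  then have "card X = card (insert v (N \<union> M))" by simp
  also have "\<dots> = 1 + card (N \<union> M)"
    using assms(1) irreflexive unfolding N_def M_def by simp
  also have "card (N \<union> M) = card N + card M"
    using assms(1) unfolding N_def M_def by (intro card_Un_disjoint) auto
  finally show ?thesis unfolding N_def M_def degree_def by simp
qed

lemma max_degree_less_card:
  assumes "finite X" "X \<noteq> {}"
  shows "max_degree X E + 1 \<le> card X"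
proof -
  obtain v where "v \<in> X" "max_degree X E = degree X E v"
    using max_degree_attained[OF assms] .
  then show ?thesis using card_eq_degree_nonneighbours[OF assms(1)] by fastforce
qed

lemma nonneighbours_clique:
  assumes "\<forall>T\<subseteq>X. independent T E \<longrightarrow> card T \<le> 2" "v \<in> X"
  shows "clique {u\<in>X. u \<noteq> v \<and> \<not> E v u} E"
  unfolding clique_def
proof (intro ballI impI)
  fix a b assume a: "a \<in> {u\<in>X. u \<noteq> v \<and> \<not> E v u}" and b: "b \<in> {u\<in>X. u \<noteq> v \<and> \<not> E v u}"
    and "a \<noteq> b"
  show "E a b"
  proof (rule ccontr)
    assume "\<not> E a b"
    then have "independent {v, a, b} E"
      using a b symmetric irreflexive unfolding independent_def by auto
    moreover have "{v, a, b} \<subseteq> X" using a b assms(2) by auto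
    ultimately have "card {v, a, b} \<le> 2" using assms(1) by blast
    moreover have "card {v, a, b} = 3" using a b \<open>a \<noteq> b\<close> by auto
    ultimately show False by simp
  qed
qed

lemma independent_extend_maximal:
  assumes "finite X" "C \<subseteq> X" "independent C E"
  obtains I where "C \<subseteq> I" "I \<subseteq> X" "independent I E" "\<forall>x\<in>X - I. \<exists>y\<in>I. E x y"
proof -
  define F where "F = {J. C \<subseteq> J \<and> J \<subseteq> X \<and> independent J E}"
  have "F \<subseteq> Pow X" unfolding F_def by auto
  then have "finite F" using assms(1) finite_subset by blast
  moreover have "C \<in> F" unfolding F_def using assms by auto
  ultimately obtain I where I: "C \<subseteq> I" "I \<subseteq> X" "independent I E"
    and maximal: "\<forall>J\<in>F. I \<subseteq> J \<longrightarrow> I = J"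
    using finite_has_maximal[of F] unfolding F_def by blast
  have "\<exists>y\<in>I. E x y" if x: "x \<in> X - I" for x
  proof (rule ccontr)
    assume no_edge: "\<not> (\<exists>y\<in>I. E x y)"
    have "independent (insert x I) E"
      unfolding independent_def
    proof (intro ballI)
      fix a b assume "a \<in> insert x I" "b \<in> insert x I"
      then show "\<not> E a b"
        using I(3) no_edge irreflexive[of x] symmetric[of a x] unfolding independent_def by auto
    qed
    then have "insert x I \<in> F" using I x unfolding F_def by auto
    then show False using maximal x by blast
  qed
  then show ?thesis using that I by blast
qed

end

section \<open>Matchings of the complement\<close>

text \<open>A matching of the complement of the graph on X, encoded as an involution p of X
  sending each vertex to its partner, or to itself if it is unmatched.\<close>

definition comatching :: "'a set \<Rightarrow> ('a \<Rightarrow> 'a \<Rightarrow> bool) \<Rightarrow> ('a \<Rightarrow> 'a) \<Rightarrow> bool" where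
  "comatching X E p \<longleftrightarrow> (\<forall>x\<in>X. p x \<in> X \<and> p (p x) = x \<and> (p x \<noteq> x \<longrightarrow> \<not> E x (p x)))"

definition coverage :: "'a set \<Rightarrow> ('a \<Rightarrow> 'a) \<Rightarrow> nat" where
  "coverage X p = card {x\<in>X. p x \<noteq> x}"

definition max_coverage :: "'a set \<Rightarrow> ('a \<Rightarrow> 'a \<Rightarrow> bool) \<Rightarrow> nat" where
  "max_coverage X E = Max {coverage X p |p. comatching X E p}"

definition maximum_comatching :: "'a set \<Rightarrow> ('a \<Rightarrow> 'a \<Rightarrow> bool) \<Rightarrow> ('a \<Rightarrow> 'a) \<Rightarrow> bool" where
  "maximum_comatching X E p \<longleftrightarrow> comatching X E p \<and> coverage X p = max_coverage X E"

lemma comatching_involution: "comatching X E p \<Longrightarrow> \<forall>x\<in>X. p x \<in> X \<and> p (p x) = x"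
  unfolding comatching_def by blast

lemma comatching_id: "comatching X E (\<lambda>x. x)"
  unfolding comatching_def by simp

lemma coverage_le_card: "finite X \<Longrightarrow> coverage X p \<le> card X"
  unfolding coverage_def by (rule card_mono) auto

lemma finite_coverages: "finite X \<Longrightarrow> finite {coverage X p |p. comatching X E p}"
  by (rule finite_subset[of _ "{0..card X}"]) (auto dest: coverage_le_card)

lemma coverage_le_max_coverage:
  "finite X \<Longrightarrow> comatching X E p \<Longrightarrow> coverage X p \<le> max_coverage X E"
  unfolding max_coverage_def by (rule Max_ge[OF finite_coverages]) auto

lemma maximum_comatching_exists:
  assumes "finite X"
  obtains p where "maximum_comatching X E p"
proof -
  have "coverage X (\<lambda>x. x) \<in> {coverage X p |p. comatching X E p}"
    using comatching_id by blast
  then have "max_coverage X E \<in> {coverage X p |p. comatching X E p}"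
    unfolding max_coverage_def using finite_coverages[OF assms] by (intro Max_in) auto
  then show ?thesis using that unfolding maximum_comatching_def by auto
qed

lemma coverage_split:
  assumes "finite X" "P \<subseteq> X"
  shows "coverage X h = card {x\<in>P. h x \<noteq> x} + card {x\<in>X - P. h x \<noteq> x}"
proof -
  have "{x\<in>X. h x \<noteq> x} = {x\<in>P. h x \<noteq> x} \<union> {x\<in>X - P. h x \<noteq> x}" using assms by auto
  moreover have "card ({x\<in>P. h x \<noteq> x} \<union> {x\<in>X - P. h x \<noteq> x})
      = card {x\<in>P. h x \<noteq> x} + card {x\<in>X - P. h x \<noteq> x}"
    using assms by (intro card_Un_disjoint) (auto intro: finite_subset)
  ultimately show ?thesis unfolding coverage_def by simp
qed

lemma comatching_Diff_pair:
  "comatching X E p \<Longrightarrow> x \<in> X \<Longrightarrow> comatching (X - {x, p x}) E p"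
  unfolding comatching_def by (metis Diff_iff insert_iff singletonD)

lemma coverage_Diff_pair:
  assumes "finite X" "comatching X E p" "x \<in> X" "p x \<noteq> x"
  shows "coverage (X - {x, p x}) p + 2 = coverage X p"
proof -
  have px: "p x \<in> X" "p (p x) = x" using assms unfolding comatching_def by auto
  have "coverage X p = card {y\<in>{x, p x}. p y \<noteq> y} + coverage (X - {x, p x}) p"
    using coverage_split[OF assms(1), of "{x, p x}"] px assms(3) unfolding coverage_def by simp
  moreover have "{y\<in>{x, p x}. p y \<noteq> y} = {x, p x}" using assms(4) px by auto
  ultimately show ?thesis using assms(4) by simp
qed

lemma comatching_induct [consumes 2, case_names unmatched remove_pair]:
  assumes "finite X" "comatching X E p"
    and unmatched: "\<And>X. finite X \<Longrightarrow> coverage X p = 0 \<Longrightarrow> Q X"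
    and remove_pair: "\<And>X x. finite X \<Longrightarrow> comatching X E p \<Longrightarrow> x \<in> X \<Longrightarrow> p x \<noteq> x \<Longrightarrow>
      Q (X - {x, p x}) \<Longrightarrow> Q X"
  shows "Q X"
  using assms(1,2)
proof (induction "coverage X p" arbitrary: X rule: less_induct)
  case less
  show ?case
  proof (cases "coverage X p = 0")
    case True
    then show ?thesis using unmatched less.prems by blast
  next
    case False
    then have "{x\<in>X. p x \<noteq> x} \<noteq> {}" unfolding coverage_def by (metis card.empty)
    then obtain x where x: "x \<in> X" "p x \<noteq> x" by blast
    have "Q (X - {x, p x})"
      using less.hyps coverage_Diff_pair[OF less.prems x] comatching_Diff_pair[OF less.prems(2) x(1)]
        less.prems(1) by simp
    then show ?thesis using remove_pair less.prems x by blast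
  qed
qed

lemma even_coverage: "finite X \<Longrightarrow> comatching X E p \<Longrightarrow> even (coverage X p)"
proof (induction X rule: comatching_induct)
  case (remove_pair X x)
  then show ?case using coverage_Diff_pair[of X E p x] by (metis even_add even_numeral)
qed simp

lemma comatching_swap:
  assumes m: "comatching X E m" and n: "comatching X E n"
    and "P \<subseteq> X" and closed: "\<forall>x\<in>P. m x \<in> P \<and> n x \<in> P"
  shows "comatching X E (\<lambda>x. if x \<in> P then m x else n x)"
  unfolding comatching_def
proof
  let ?s = "\<lambda>x. if x \<in> P then m x else n x"
  fix x assume x: "x \<in> X"
  show "?s x \<in> X \<and> ?s (?s x) = x \<and> (?s x \<noteq> x \<longrightarrow> \<not> E x (?s x))"
  proof (cases "x \<in> P")
    case True
    then show ?thesis using closed x m unfolding comatching_def by auto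
  next
    case False
    have "n x \<notin> P"
    proof
      assume "n x \<in> P"
      then have "n (n x) \<in> P" using closed by blast
      then show False using False x n unfolding comatching_def by simp
    qed
    then show ?thesis using False x n unfolding comatching_def by auto
  qed
qed

lemma coverage_swap:
  assumes "finite X" "P \<subseteq> X"
  shows "coverage X (\<lambda>x. if x \<in> P then m x else n x) + coverage X (\<lambda>x. if x \<in> P then n x else m x)
    = coverage X m + coverage X n"
proof -
  have "{x\<in>P. (if x \<in> P then m x else n x) \<noteq> x} = {x\<in>P. m x \<noteq> x}"
    "{x\<in>X - P. (if x \<in> P then m x else n x) \<noteq> x} = {x\<in>X - P. n x \<noteq> x}"
    "{x\<in>P. (if x \<in> P then n x else m x) \<noteq> x} = {x\<in>P. n x \<noteq> x}"
    "{x\<in>X - P. (if x \<in> P then n x else m x) \<noteq> x} = {x\<in>X - P. m x \<noteq> x}"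
    by auto
  then show ?thesis using coverage_split[OF assms] by simp
qed

lemma maximum_comatching_swap:
  assumes "finite X" "maximum_comatching X E m" "maximum_comatching X E n"
    and "P \<subseteq> X" "\<forall>x\<in>P. m x \<in> P \<and> n x \<in> P"
  shows "maximum_comatching X E (\<lambda>x. if x \<in> P then m x else n x)"
proof -
  have m: "comatching X E m" and n: "comatching X E n"
    using assms(2,3) unfolding maximum_comatching_def by blast+
  have "comatching X E (\<lambda>x. if x \<in> P then m x else n x)"
    using comatching_swap[OF m n assms(4,5)] .
  moreover have "comatching X E (\<lambda>x. if x \<in> P then n x else m x)"
    using comatching_swap[OF n m assms(4)] assms(5) by blast
  ultimately have "coverage X (\<lambda>x. if x \<in> P then m x else n x) \<le> max_coverage X E"
    "coverage X (\<lambda>x. if x \<in> P then n x else m x) \<le> max_coverage X E"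
    using coverage_le_max_coverage[OF assms(1)] by blast+
  moreover have "coverage X m = max_coverage X E" "coverage X n = max_coverage X E"
    using assms(2,3) unfolding maximum_comatching_def by blast+
  ultimately show ?thesis
    using coverage_swap[OF assms(1,4), of m n] \<open>comatching X E (\<lambda>x. if x \<in> P then m x else n x)\<close>
    unfolding maximum_comatching_def by linarith
qed

lemma max_coverage_Un:
  assumes "finite A" "finite B" "A \<inter> B = {}"
  shows "max_coverage A E + max_coverage B E \<le> max_coverage (A \<union> B) E"
proof -
  obtain p where p: "maximum_comatching A E p" using maximum_comatching_exists assms(1) .
  obtain q where q: "maximum_comatching B E q" using maximum_comatching_exists assms(2) .
  let ?r = "\<lambda>x. if x \<in> A then p x else q x"
  have "comatching (A \<union> B) E ?r"
    unfolding comatching_def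
  proof
    fix x assume x: "x \<in> A \<union> B"
    show "?r x \<in> A \<union> B \<and> ?r (?r x) = x \<and> (?r x \<noteq> x \<longrightarrow> \<not> E x (?r x))"
    proof (cases "x \<in> A")
      case True
      then show ?thesis using p unfolding maximum_comatching_def comatching_def by auto
    next
      case False
      then have "x \<in> B" using x by blast
      then have "q x \<in> B" "q (q x) = x" "q x \<noteq> x \<longrightarrow> \<not> E x (q x)"
        using q unfolding maximum_comatching_def comatching_def by auto
      moreover have "q x \<notin> A" using \<open>q x \<in> B\<close> assms(3) by blast
      ultimately show ?thesis using False by auto
    qed
  qed
  then have "coverage (A \<union> B) ?r \<le> max_coverage (A \<union> B) E"
    using coverage_le_max_coverage assms by blast
  moreover have "coverage (A \<union> B) ?r = coverage A p + coverage B q"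
  proof -
    have "{x\<in>A. ?r x \<noteq> x} = {x\<in>A. p x \<noteq> x}" "{x\<in>A \<union> B - A. ?r x \<noteq> x} = {x\<in>B. q x \<noteq> x}"
      using assms(3) by auto
    then show ?thesis using coverage_split[of "A \<union> B" A ?r] assms unfolding coverage_def by simp
  qed
  ultimately show ?thesis using p q unfolding maximum_comatching_def by simp
qed

lemma max_coverage_Diff_vertex:
  assumes "finite X" "v \<in> X" and matched: "\<forall>p. maximum_comatching X E p \<longrightarrow> p v \<noteq> v"
  shows "max_coverage (X - {v}) E + 2 \<le> max_coverage X E"
proof -
  obtain q where q: "maximum_comatching (X - {v}) E q"
    using maximum_comatching_exists assms(1) by blast
  then have q_comatching: "comatching (X - {v}) E q"
    and q_coverage: "coverage (X - {v}) q = max_coverage (X - {v}) E"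
    unfolding maximum_comatching_def by blast+
  let ?q = "q(v := v)"
  have q': "comatching X E ?q"
    unfolding comatching_def
  proof
    fix x assume "x \<in> X"
    show "?q x \<in> X \<and> ?q (?q x) = x \<and> (?q x \<noteq> x \<longrightarrow> \<not> E x (?q x))"
    proof (cases "x = v")
      case False
      then have "q x \<in> X - {v}" "q (q x) = x" "q x \<noteq> x \<longrightarrow> \<not> E x (q x)"
        using q_comatching \<open>x \<in> X\<close> unfolding comatching_def by auto
      then show ?thesis using False by auto
    qed (use assms(2) in simp)
  qed
  have "{x\<in>X. ?q x \<noteq> x} = {x\<in>X - {v}. q x \<noteq> x}" by auto
  then have cov: "coverage X ?q = max_coverage (X - {v}) E"
    using q_coverage unfolding coverage_def by simp
  then have le: "max_coverage (X - {v}) E \<le> max_coverage X E"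
    using coverage_le_max_coverage[OF assms(1) q'] by simp
  have ne: "max_coverage (X - {v}) E \<noteq> max_coverage X E"
  proof
    assume "max_coverage (X - {v}) E = max_coverage X E"
    then have "maximum_comatching X E ?q"
      using q' cov unfolding maximum_comatching_def by simp
    then show False using matched[rule_format, of ?q] by simp
  qed
  have "even (max_coverage (X - {v}) E)"
    using even_coverage[OF _ q_comatching] q_coverage assms(1) by simp
  moreover obtain p where "maximum_comatching X E p" using maximum_comatching_exists assms(1) .
  then have "even (max_coverage X E)"
    using even_coverage[OF assms(1)] unfolding maximum_comatching_def by metis
  ultimately show ?thesis using le ne by (auto elim!: evenE)
qed

context undirected
begin

lemma chromatic_number_comatching:
  "finite X \<Longrightarrow> comatching X E p \<Longrightarrow> 2 * chromatic_number X E + coverage X p \<le> 2 * card X"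
proof (induction X rule: comatching_induct)
  case (unmatched X)
  then show ?case using chromatic_number_le_card[of X] by simp
next
  case (remove_pair X x)
  have px: "p x \<in> X" "\<not> E x (p x)" using remove_pair.hyps unfolding comatching_def by auto
  then have "independent {x, p x} E"
    using irreflexive symmetric[of "p x" x] unfolding independent_def by auto
  then have "chromatic_number X E \<le> chromatic_number (X - {x, p x}) E + 1"
    using chromatic_number_Diff_independent[OF remove_pair.hyps(1)] by blast
  moreover have "card (X - {x, p x}) + 2 = card X"
  proof -
    have sub: "{x, p x} \<subseteq> X" using px remove_pair.hyps(3) by blast
    have "card {x, p x} = 2" using remove_pair.hyps(4) by simp
    then show ?thesis
      using card_Diff_subset[OF _ sub] card_mono[OF remove_pair.hyps(1) sub] by simp
  qed
  moreover have "coverage (X - {x, p x}) p + 2 = coverage X p"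
    using coverage_Diff_pair[OF remove_pair.hyps(1-4)] .
  ultimately show ?case using remove_pair.IH by linarith
qed

lemma maximum_comatching_unmatched_adjacent:
  assumes "finite X" "maximum_comatching X E m" "u \<in> X" "v \<in> X" "u \<noteq> v" "m u = u" "m v = v"
  shows "E u v"
proof (rule ccontr)
  assume non_adjacent: "\<not> E u v"
  let ?m' = "m(u := v, v := u)"
  have m: "comatching X E m" using assms(2) unfolding maximum_comatching_def by blast
  have "comatching X E ?m'"
    unfolding comatching_def
  proof
    fix x assume x: "x \<in> X"
    show "?m' x \<in> X \<and> ?m' (?m' x) = x \<and> (?m' x \<noteq> x \<longrightarrow> \<not> E x (?m' x))"
    proof (cases "x = u \<or> x = v")
      case True
      then show ?thesis using assms(3-5) non_adjacent symmetric[of v u] by auto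
    next
      case False
      have "m x \<in> X" "m (m x) = x" "m x \<noteq> x \<longrightarrow> \<not> E x (m x)"
        using m x unfolding comatching_def by auto
      moreover from this have "m x \<noteq> u" "m x \<noteq> v" using False assms(6,7) by auto
      ultimately show ?thesis using False by auto
    qed
  qed
  moreover have "{x\<in>X. ?m' x \<noteq> x} = insert u (insert v {x\<in>X. m x \<noteq> x})"
    using assms(3-7) by auto
  then have "coverage X ?m' = coverage X m + 2"
    using assms(1,5,6,7) unfolding coverage_def by simp
  ultimately show False
    using coverage_le_max_coverage[OF assms(1), of E ?m'] assms(2)
    unfolding maximum_comatching_def by simp
qed

end

section \<open>Joint orbits of two involutions\<close>

inductive_set joint_orbit :: "('a \<Rightarrow> 'a) \<Rightarrow> ('a \<Rightarrow> 'a) \<Rightarrow> 'a \<Rightarrow> 'a set" for m n u where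
  base: "u \<in> joint_orbit m n u"
| step_m: "x \<in> joint_orbit m n u \<Longrightarrow> m x \<in> joint_orbit m n u"
| step_n: "x \<in> joint_orbit m n u \<Longrightarrow> n x \<in> joint_orbit m n u"

lemma joint_orbit_subset:
  assumes "\<forall>x\<in>X. m x \<in> X" "\<forall>x\<in>X. n x \<in> X" "u \<in> X"
  shows "joint_orbit m n u \<subseteq> X"
proof
  fix x assume "x \<in> joint_orbit m n u"
  then show "x \<in> X"
  proof induction
    case base
    show ?case by (rule assms(3))
  next
    case (step_m x)
    then show ?case using assms(1) by blast
  next
    case (step_n x)
    then show ?case using assms(2) by blast
  qed
qed

lemma joint_orbit_trans:
  assumes "y \<in> joint_orbit m n u"
  shows "joint_orbit m n y \<subseteq> joint_orbit m n u"
proof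
  fix x assume "x \<in> joint_orbit m n y"
  then show "x \<in> joint_orbit m n u"
  proof induction
    case base
    show ?case by (rule assms)
  next
    case (step_m x)
    show ?case using step_m.IH by (rule joint_orbit.step_m)
  next
    case (step_n x)
    show ?case using step_n.IH by (rule joint_orbit.step_n)
  qed
qed

locale involution_pair =
  fixes X :: "'a set" and m n :: "'a \<Rightarrow> 'a"
  assumes m_closed: "x \<in> X \<Longrightarrow> m x \<in> X" and m_m: "x \<in> X \<Longrightarrow> m (m x) = x"
    and n_closed: "x \<in> X \<Longrightarrow> n x \<in> X" and n_n: "x \<in> X \<Longrightarrow> n (n x) = x"
begin

lemma joint_orbit_sym:
  assumes "u \<in> X" "y \<in> joint_orbit m n u"
  shows "u \<in> joint_orbit m n y"
  using assms(2)
proof induction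
  case base
  show ?case by (rule joint_orbit.base)
next
  case (step_m x)
  have "x \<in> X" using joint_orbit_subset[of X m n u] m_closed n_closed assms(1) step_m.hyps by blast
  moreover have "m (m x) \<in> joint_orbit m n (m x)"
    by (intro joint_orbit.step_m joint_orbit.base)
  ultimately have "x \<in> joint_orbit m n (m x)" by (simp add: m_m)
  from joint_orbit_trans[OF this] step_m.IH show ?case by (rule subsetD)
next
  case (step_n x)
  have "x \<in> X" using joint_orbit_subset[of X m n u] m_closed n_closed assms(1) step_n.hyps by blast
  moreover have "n (n x) \<in> joint_orbit m n (n x)"
    by (intro joint_orbit.step_n joint_orbit.base)
  ultimately have "x \<in> joint_orbit m n (n x)" by (simp add: n_n)
  from joint_orbit_trans[OF this] step_n.IH show ?case by (rule subsetD)
qed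

text \<open>The joint orbit of a fixed point u of m is traced by the walk applying n, m, n, m, ...
  from u; it ends at the first point fixed by the map about to be applied.\<close>

definition alternate :: "nat \<Rightarrow> 'a \<Rightarrow> 'a" where
  "alternate i = (if even i then n else m)"

primrec walk :: "'a \<Rightarrow> nat \<Rightarrow> 'a" where
  "walk u 0 = u"
| "walk u (Suc i) = alternate i (walk u i)"

definition stops :: "'a \<Rightarrow> nat \<Rightarrow> bool" where
  "stops u i \<longleftrightarrow> alternate i (walk u i) = walk u i"

lemma walk_in: "u \<in> X \<Longrightarrow> walk u i \<in> X"
  by (induction i) (simp_all add: alternate_def m_closed n_closed)

lemma alternate_walk_Suc: "u \<in> X \<Longrightarrow> alternate i (walk u (Suc i)) = walk u i"
  using walk_in[of u i] by (simp add: alternate_def m_m n_n)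

lemma alternate_Suc_walk:
  assumes "u \<in> X" "m u = u"
  shows "alternate (Suc i) (walk u i) = (if i = 0 then u else walk u (i - 1))"
proof (cases i)
  case 0
  then show ?thesis using assms(2) by (simp add: alternate_def)
next
  case (Suc j)
  then show ?thesis using alternate_walk_Suc[OF assms(1), of j] by (simp add: alternate_def)
qed

lemma joint_orbit_subset_walk:
  assumes "u \<in> X" "m u = u"
  shows "joint_orbit m n u \<subseteq> walk u ` {i. \<forall>j<i. \<not> stops u j}"
proof -
  let ?T = "{i. \<forall>j<i. \<not> stops u j}"
  have current: "alternate i (walk u i) \<in> walk u ` ?T" if "i \<in> ?T" for i
  proof (cases "stops u i")
    case True
    then show ?thesis using that unfolding stops_def by auto
  next
    case False
    then have "Suc i \<in> ?T" using that by (auto simp: less_Suc_eq)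
    then show ?thesis by (rule rev_image_eqI) simp
  qed
  have previous: "alternate (Suc i) (walk u i) \<in> walk u ` ?T" if "i \<in> ?T" for i
  proof (cases "i = 0")
    case True
    have "0 \<in> ?T" by simp
    then show ?thesis using alternate_Suc_walk[OF assms, of i] True by (auto intro: rev_image_eqI)
  next
    case False
    have "i - 1 \<in> ?T" using that by auto
    then show ?thesis using alternate_Suc_walk[OF assms, of i] False by (auto intro: rev_image_eqI)
  qed
  have closed: "h (walk u i) \<in> walk u ` ?T" if "i \<in> ?T" "h = m \<or> h = n" for h i
  proof -
    have "h = alternate i \<or> h = alternate (Suc i)" using that(2) by (auto simp: alternate_def)
    then show ?thesis using current[OF that(1)] previous[OF that(1)] by (elim disjE) simp_all
  qed
  show ?thesis
  proof
    fix x assume "x \<in> joint_orbit m n u"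
    then show "x \<in> walk u ` ?T"
    proof induction
      case base
      have "0 \<in> ?T" by simp
      then show ?case by (rule rev_image_eqI) simp
    next
      case (step_m x)
      then obtain i where "i \<in> ?T" "x = walk u i" by blast
      then show ?case using closed[of i m] by simp
    next
      case (step_n x)
      then obtain i where "i \<in> ?T" "x = walk u i" by blast
      then show ?case using closed[of i n] by simp
    qed
  qed
qed

lemma stops_first:
  assumes "\<forall>j<i. \<not> stops u j" "stops u i"
  shows "i = (LEAST j. stops u j)"
  using assms by (intro Least_equality[symmetric]) (auto simp: not_less[symmetric])

lemma walk_fixed_by_previous_map:
  assumes "u \<in> X" "m u = u" "\<forall>j<i. \<not> stops u j" "alternate (Suc i) (walk u i) = walk u i"
  shows "i = 0"
proof (rule ccontr)
  assume "i \<noteq> 0"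
  then obtain j where j: "i = Suc j" by (cases i) auto
  then have "walk u j = walk u i" using assms(4) alternate_Suc_walk[OF assms(1,2), of i] by simp
  then have "stops u j" using j unfolding stops_def by simp
  then show False using assms(3) j by blast
qed

lemma joint_orbit_fixed_points:
  assumes "u \<in> X" "m u = u"
  obtains z where "\<forall>x\<in>joint_orbit m n u. (n x = x \<longrightarrow> x = z) \<and> (m x = x \<longrightarrow> x = u \<or> x = z)"
proof
  let ?z = "walk u (LEAST j. stops u j)"
  show "\<forall>x\<in>joint_orbit m n u. (n x = x \<longrightarrow> x = ?z) \<and> (m x = x \<longrightarrow> x = u \<or> x = ?z)"
  proof (intro ballI conjI impI)
    fix x assume "x \<in> joint_orbit m n u"
    then obtain i where i: "\<forall>j<i. \<not> stops u j" "x = walk u i"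
      using joint_orbit_subset_walk[OF assms] by blast
    have stop: "x = ?z" if "alternate i x = x"
      using stops_first[OF i(1)] that i(2) unfolding stops_def by simp
    have start: "i = 0" if "alternate (Suc i) x = x"
      using walk_fixed_by_previous_map[OF assms i(1)] that i(2) by simp
    {
      assume "n x = x"
      then show "x = ?z"
        using stop start by (cases "even i") (auto simp: alternate_def)
    next
      assume "m x = x"
      then show "x = u \<or> x = ?z"
        using stop start i(2) by (cases "even i") (auto simp: alternate_def)
    }
  qed
qed

end

section \<open>Gallai's lemma\<close>

lemma maximum_comatching_two_unmatched:
  assumes "finite X" "maximum_comatching X E m" "max_coverage X E + 2 \<le> card X"
  obtains u v where "u \<in> X" "v \<in> X" "u \<noteq> v" "m u = u" "m v = v"
proof -
  have "card X = card ({x\<in>X. m x \<noteq> x} \<union> {x\<in>X. m x = x})"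
    by (rule arg_cong[where f = card]) auto
  also have "\<dots> = card {x\<in>X. m x \<noteq> x} + card {x\<in>X. m x = x}"
    using assms(1) by (intro card_Un_disjoint) auto
  finally have "2 \<le> card {x\<in>X. m x = x}"
    using assms(2,3) unfolding maximum_comatching_def coverage_def by simp
  then obtain U where "U \<subseteq> {x\<in>X. m x = x}" "card U = 2"
    by (rule obtain_subset_with_card_n)
  then obtain u v where "U = {u, v}" "u \<noteq> v" unfolding card_2_iff by blast
  then show ?thesis using that \<open>U \<subseteq> {x\<in>X. m x = x}\<close> by blast
qed

lemma maximum_comatching_closest_joint_orbit:
  assumes "finite X" "maximum_comatching X E m" "maximum_comatching X E n" "n w = w"
    and closest: "\<forall>q. maximum_comatching X E q \<and> q w = w \<longrightarrow>
      card {x\<in>X. m x \<noteq> n x} \<le> card {x\<in>X. m x \<noteq> q x}"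
    and "y \<in> X" "m y = y" "n y \<noteq> y"
  shows "w \<in> joint_orbit m n y"
proof (rule ccontr)
  assume "w \<notin> joint_orbit m n y"
  let ?P = "joint_orbit m n y"
  let ?n' = "\<lambda>x. if x \<in> ?P then m x else n x"
  have "\<forall>x\<in>X. m x \<in> X" "\<forall>x\<in>X. n x \<in> X"
    using assms(2,3) comatching_involution[of X E m] comatching_involution[of X E n]
    unfolding maximum_comatching_def by simp_all
  then have "?P \<subseteq> X" using assms(6) by (rule joint_orbit_subset)
  moreover have "\<forall>x\<in>?P. m x \<in> ?P \<and> n x \<in> ?P"
  proof (intro ballI conjI)
    fix x assume "x \<in> ?P"
    then show "m x \<in> ?P" "n x \<in> ?P" by (rule joint_orbit.step_m, rule joint_orbit.step_n)
  qed
  ultimately have "maximum_comatching X E ?n'"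
    by (rule maximum_comatching_swap[OF assms(1-3)])
  moreover have "?n' w = w" using \<open>w \<notin> ?P\<close> assms(4) by simp
  ultimately have "card {x\<in>X. m x \<noteq> n x} \<le> card {x\<in>X. m x \<noteq> ?n' x}"
    using closest by blast
  moreover have "{x\<in>X. m x \<noteq> ?n' x} \<subset> {x\<in>X. m x \<noteq> n x}"
  proof
    show "{x\<in>X. m x \<noteq> ?n' x} \<subseteq> {x\<in>X. m x \<noteq> n x}" by auto
    have "y \<in> ?P" by (rule joint_orbit.base)
    then have "y \<notin> {x\<in>X. m x \<noteq> ?n' x}" by simp
    moreover have "y \<in> {x\<in>X. m x \<noteq> n x}" using assms(6-8) by simp
    ultimately show "{x\<in>X. m x \<noteq> ?n' x} \<noteq> {x\<in>X. m x \<noteq> n x}" by blast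
  qed
  then have "card {x\<in>X. m x \<noteq> ?n' x} < card {x\<in>X. m x \<noteq> n x}"
    using assms(1) by (intro psubset_card_mono) auto
  ultimately show False by simp
qed

definition unmatched_pair_at_distance :: "'a set \<Rightarrow> ('a \<Rightarrow> 'a \<Rightarrow> bool) \<Rightarrow> nat \<Rightarrow> bool" where
  "unmatched_pair_at_distance X E k \<longleftrightarrow> (\<exists>m u v. maximum_comatching X E m \<and> u \<in> X \<and> v \<in> X \<and>
     u \<noteq> v \<and> m u = u \<and> m v = v \<and> (complement X E ^^ k) u v)"

lemma unmatched_pair_at_some_distance:
  assumes "finite X" "\<forall>a\<in>X. \<forall>b\<in>X. (complement X E)\<^sup>*\<^sup>* a b" "max_coverage X E + 2 \<le> card X"
  shows "\<exists>k. unmatched_pair_at_distance X E k"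
proof -
  obtain m where m: "maximum_comatching X E m" using maximum_comatching_exists[OF assms(1)] .
  obtain u v where uv: "u \<in> X" "v \<in> X" "u \<noteq> v" "m u = u" "m v = v"
    using maximum_comatching_two_unmatched[OF assms(1) m assms(3)] .
  have "(complement X E)\<^sup>*\<^sup>* u v" using assms(2) uv(1,2) by blast
  then obtain k where "(complement X E ^^ k) u v" by (blast dest: rtranclp_imp_relpowp)
  then show ?thesis unfolding unmatched_pair_at_distance_def using m uv by blast
qed

text \<open>Take a maximum m and unmatched u, v at minimal distance in the complement, and let w
  be the vertex after u on a shortest path. A maximum n missing w and closest to m misses
  neither u nor v; swapping n with m along the joint orbit of u (or v) shows that this orbit
  must contain w. So u, v and w all lie in the joint orbit of u, which has only two ends.\<close>

lemma (in undirected) gallai_lemma: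
  assumes fin: "finite X"
    and connected: "\<forall>a\<in>X. \<forall>b\<in>X. (complement X E)\<^sup>*\<^sup>* a b"
    and missed: "\<forall>v\<in>X. \<exists>p. maximum_comatching X E p \<and> p v = v"
  shows "card X \<le> max_coverage X E + 1"
proof (rule ccontr)
  assume "\<not> card X \<le> max_coverage X E + 1"
  then have two: "max_coverage X E + 2 \<le> card X" by simp
  let ?R = "complement X E"
  obtain k where "unmatched_pair_at_distance X E k"
    and minimal: "\<forall>k'<k. \<not> unmatched_pair_at_distance X E k'"
    using unmatched_pair_at_some_distance[OF fin connected two]
    unfolding exists_least_iff[of "unmatched_pair_at_distance X E"] by blast
  then obtain m u v where m: "maximum_comatching X E m"
    and uv: "u \<in> X" "v \<in> X" "u \<noteq> v" "m u = u" "m v = v" and path: "(?R ^^ k) u v"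
    unfolding unmatched_pair_at_distance_def by blast
  obtain k' where k: "k = Suc k'" using path uv(3) by (cases k) auto
  from path[unfolded k] obtain w where "?R u w" and path': "(?R ^^ k') w v"
    by (rule relpowp_Suc_E2)
  then have w: "w \<in> X" "u \<noteq> w" "\<not> E u w" unfolding complement_def by auto
  have "w \<noteq> v" using maximum_comatching_unmatched_adjacent[OF fin m uv] w by auto
  obtain n where "maximum_comatching X E n \<and> n w = w"
    and closest: "\<forall>q. maximum_comatching X E q \<and> q w = w \<longrightarrow>
      card {x\<in>X. m x \<noteq> n x} \<le> card {x\<in>X. m x \<noteq> q x}"
    using ex_has_least_nat[of "\<lambda>q. maximum_comatching X E q \<and> q w = w" _
      "\<lambda>q. card {x\<in>X. m x \<noteq> q x}"] missed w(1) by blast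
  then have n: "maximum_comatching X E n" "n w = w" by blast+
  have "n u \<noteq> u"
    using maximum_comatching_unmatched_adjacent[OF fin _ uv(1) w(1,2)] n w(3) by blast
  have "n v \<noteq> v"
  proof
    assume "n v = v"
    then have "unmatched_pair_at_distance X E k'"
      unfolding unmatched_pair_at_distance_def using n w(1) uv(2) \<open>w \<noteq> v\<close> path'
      by (intro exI[of _ n] exI[of _ w] exI[of _ v]) simp
    then show False using minimal k by blast
  qed
  note orbit = maximum_comatching_closest_joint_orbit[OF fin m n closest]
  interpret involution_pair X m n
    using comatching_involution[of X E m] comatching_involution[of X E n] m n(1)
    unfolding maximum_comatching_def by unfold_locales simp_all
  have wu: "w \<in> joint_orbit m n u" by (rule orbit[OF uv(1,4) \<open>n u \<noteq> u\<close>])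
  have "v \<in> joint_orbit m n w"
    by (rule joint_orbit_sym[OF uv(2) orbit[OF uv(2,5) \<open>n v \<noteq> v\<close>]])
  with joint_orbit_trans[OF wu] have vu: "v \<in> joint_orbit m n u" by (rule subsetD)
  obtain z where z: "\<forall>x\<in>joint_orbit m n u. (n x = x \<longrightarrow> x = z) \<and> (m x = x \<longrightarrow> x = u \<or> x = z)"
    using joint_orbit_fixed_points[OF uv(1,4)] .
  have "w = z" using z wu n(2) by blast
  moreover have "v = u \<or> v = z" using z vu uv(5) by blast
  ultimately show False using uv(3) \<open>w \<noteq> v\<close> by blast
qed

section \<open>Graphs with independence number at most two\<close>

lemma max_coverage_le_card:
  assumes "finite X"
  shows "max_coverage X E \<le> card X"
proof -
  obtain p where "maximum_comatching X E p" using maximum_comatching_exists[OF assms] .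
  then show ?thesis using coverage_le_card[OF assms, of p] unfolding maximum_comatching_def by simp
qed

context undirected
begin

lemma coverage_bound_clique_number_le_1:
  assumes "finite X" "\<forall>T\<subseteq>X. independent T E \<longrightarrow> card T \<le> 2" "clique_number X E \<le> 1"
  shows "3 * card X \<le> 2 * max_coverage X E + 2 * clique_number X E + max_degree X E + 1"
proof -
  have "independent X E"
    unfolding independent_def
  proof (intro ballI notI)
    fix x y assume xy: "x \<in> X" "y \<in> X" "E x y"
    then have "x \<noteq> y" using irreflexive by auto
    then have "clique {x, y} E" using xy(3) symmetric[of x y] unfolding clique_def by auto
    then have "card {x, y} \<le> clique_number X E" using clique_number_ge[OF assms(1)] xy by simp
    then show False using assms(3) \<open>x \<noteq> y\<close> by simp
  qed
  then have "card X \<le> 2" using assms(2) by blast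
  then have "card X = 0 \<or> card X = Suc 0 \<or> card X = 2" by linarith
  then consider "X = {}" | x where "X = {x}" | a b where "X = {a, b}" "a \<noteq> b"
    using assms(1) unfolding card_1_singleton_iff card_2_iff by auto
  then show ?thesis
  proof cases
    case 1
    then show ?thesis by simp
  next
    case (2 x)
    then show ?thesis using clique_number_pos[OF assms(1), of x E] by simp
  next
    case (3 a b)
    let ?p = "\<lambda>x. if x = a then b else if x = b then a else x"
    have "\<not> E a b" "\<not> E b a" using \<open>independent X E\<close> 3 unfolding independent_def by auto
    then have "comatching X E ?p" using 3 unfolding comatching_def by auto
    moreover have "coverage X ?p = 2"
    proof -
      have "{x\<in>X. ?p x \<noteq> x} = {a, b}" using 3 by auto
      then show ?thesis unfolding coverage_def using 3 by simp
    qed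
    ultimately have "2 \<le> max_coverage X E"
      using coverage_le_max_coverage[OF assms(1), of E ?p] by simp
    then show ?thesis using 3 clique_number_pos[OF assms(1), of a E] by simp
  qed
qed

lemma coverage_bound_join:
  assumes "finite A" "finite B" "A \<inter> B = {}" "A \<noteq> {}" "B \<noteq> {}" "\<forall>a\<in>A. \<forall>b\<in>B. E a b"
    and "3 * card A \<le> 2 * max_coverage A E + 2 * clique_number A E + max_degree A E + 1"
    and "3 * card B \<le> 2 * max_coverage B E + 2 * clique_number B E + max_degree B E + 1"
  shows "3 * card (A \<union> B)
    \<le> 2 * max_coverage (A \<union> B) E + 2 * clique_number (A \<union> B) E + max_degree (A \<union> B) E + 1"
proof -
  have fin: "finite (A \<union> B)" using assms(1,2) by simp
  have BA: "\<forall>b\<in>B. \<forall>a\<in>A. E b a" using assms(6) symmetric by blast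
  have "card (A \<union> B) = card A + card B" using assms(1-3) by (rule card_Un_disjoint)
  moreover have "max_degree A E + card B \<le> max_degree (A \<union> B) E"
    using max_degree_join[OF fin _ _ assms(3,4,6)] by blast
  moreover have "max_degree B E + card A \<le> max_degree (A \<union> B) E"
    using max_degree_join[OF fin _ _ _ assms(5) BA] assms(3) by blast
  moreover have "max_degree (A \<union> B) E + 1 \<le> card (A \<union> B)"
    using max_degree_less_card[OF fin] assms(4) by blast
  moreover have "max_coverage A E + max_coverage B E \<le> max_coverage (A \<union> B) E"
    using max_coverage_Un[OF assms(1-3)] .
  moreover have "clique_number A E + clique_number B E \<le> clique_number (A \<union> B) E"
    using clique_number_join[OF assms(1-3,6)] .
  ultimately show ?thesis using assms(7,8) by linarith
qed

lemma coverage_bound_Diff_vertex: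
  assumes "finite X" "v \<in> X" "max_coverage (X - {v}) E + 2 \<le> max_coverage X E"
    and "3 * card (X - {v})
      \<le> 2 * max_coverage (X - {v}) E + 2 * clique_number (X - {v}) E + max_degree (X - {v}) E + 1"
  shows "3 * card X \<le> 2 * max_coverage X E + 2 * clique_number X E + max_degree X E + 1"
proof -
  have "2 \<le> card X" using assms(3) max_coverage_le_card[OF assms(1), of E] by linarith
  have "X - {v} \<noteq> {}"
  proof
    assume "X - {v} = {}"
    then have "X = {v}" using assms(2) by blast
    then show False using \<open>2 \<le> card X\<close> by simp
  qed
  then have "max_degree (X - {v}) E \<le> max_degree X E"
    using max_degree_mono[OF assms(1)] by blast
  moreover have "clique_number (X - {v}) E \<le> clique_number X E"
    using clique_number_mono[OF assms(1)] by blast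
  moreover have "card (X - {v}) + 1 = card X"
    using assms(1,2) card_Diff1_less[OF assms(1,2)] by simp
  ultimately show ?thesis using assms(3,4) by linarith
qed

lemma coverage_bound_near_perfect:
  assumes "finite X" "\<forall>T\<subseteq>X. independent T E \<longrightarrow> card T \<le> 2" "v \<in> X"
    and "card X \<le> max_coverage X E + 1" "2 \<le> clique_number X E"
  shows "3 * card X \<le> 2 * max_coverage X E + 2 * clique_number X E + max_degree X E + 1"
proof -
  have "card {u\<in>X. u \<noteq> v \<and> \<not> E v u} \<le> clique_number X E"
    using clique_number_ge[OF assms(1) _ nonneighbours_clique[OF assms(2,3)]] by blast
  moreover have "degree X E v \<le> max_degree X E"
    using degree_le_max_degree[OF assms(1,3)] .
  ultimately show ?thesis
    using card_eq_degree_nonneighbours[OF assms(1,3)] assms(4,5) by linarith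
qed

text \<open>Induction on the number of vertices: a disconnected complement splits the graph into a
  join; a vertex matched by every maximum matching of the complement can be deleted; otherwise
  Gallai's lemma gives a near-perfect matching, and the non-neighbours of a vertex form a clique.\<close>

lemma coverage_bound_independence_le_2:
  assumes "finite X" "\<forall>T\<subseteq>X. independent T E \<longrightarrow> card T \<le> 2"
  shows "3 * card X \<le> 2 * max_coverage X E + 2 * clique_number X E + max_degree X E + 1"
  using assms
proof (induction "card X" arbitrary: X rule: less_induct)
  case less
  note fin = less.prems(1) and alpha = less.prems(2)
  have IH: "3 * card Y \<le> 2 * max_coverage Y E + 2 * clique_number Y E + max_degree Y E + 1"
    if "Y \<subset> X" for Y
  proof -
    have "finite Y" using that fin finite_subset by blast
    moreover have "\<forall>T\<subseteq>Y. independent T E \<longrightarrow> card T \<le> 2" using that alpha by blast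
    ultimately show ?thesis using less.hyps[OF psubset_card_mono[OF fin that]] by blast
  qed
  show ?case
  proof (cases "clique_number X E \<le> 1")
    case True
    then show ?thesis using coverage_bound_clique_number_le_1[OF fin alpha] by blast
  next
    case False
    then have omega: "2 \<le> clique_number X E" by simp
    show ?thesis
    proof (cases "\<forall>a\<in>X. \<forall>b\<in>X. (complement X E)\<^sup>*\<^sup>* a b")
      case False
      then obtain a b where "a \<in> X" "b \<in> X" "\<not> (complement X E)\<^sup>*\<^sup>* a b" by blast
      then obtain A B where AB: "A \<noteq> {}" "B \<noteq> {}" "A \<union> B = X" "A \<inter> B = {}"
        "\<forall>x\<in>A. \<forall>y\<in>B. E x y"
        by (rule complement_not_connected_split)
      have "A \<subset> X" "B \<subset> X" using AB(1-4) by auto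
      moreover have "finite A" "finite B" using AB(3) fin by auto
      ultimately show ?thesis
        using coverage_bound_join[OF _ _ AB(4,1,2,5) IH IH] AB(3) by blast
    next
      case connected: True
      show ?thesis
      proof (cases "\<exists>v\<in>X. \<forall>p. maximum_comatching X E p \<longrightarrow> p v \<noteq> v")
        case True
        then obtain v where v: "v \<in> X" "\<forall>p. maximum_comatching X E p \<longrightarrow> p v \<noteq> v" by blast
        have "X - {v} \<subset> X" using v(1) by blast
        then show ?thesis
          using coverage_bound_Diff_vertex[OF fin v(1) max_coverage_Diff_vertex[OF fin v] IH] by blast
      next
        case False
        then have missed: "\<forall>v\<in>X. \<exists>p. maximum_comatching X E p \<and> p v = v" by blast
        obtain C where "C \<subseteq> X" "card C = clique_number X E"
          using clique_number_attained[OF fin] by blast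
        then obtain v where "v \<in> X" using omega by fastforce
        then show ?thesis
          using coverage_bound_near_perfect[OF fin alpha _ gallai_lemma[OF fin connected missed] omega]
          by blast
      qed
    qed
  qed
qed

lemma chromatic_number_bound_independence_le_2:
  assumes "finite X" "\<forall>T\<subseteq>X. independent T E \<longrightarrow> card T \<le> 2"
  shows "4 * chromatic_number X E \<le> 2 * clique_number X E + card X + max_degree X E + 1"
proof -
  obtain p where "maximum_comatching X E p" using maximum_comatching_exists[OF assms(1)] .
  then have "comatching X E p" "coverage X p = max_coverage X E"
    unfolding maximum_comatching_def by blast+
  then have "2 * chromatic_number X E + max_coverage X E \<le> 2 * card X"
    using chromatic_number_comatching[OF assms(1), of p] by simp
  then show ?thesis using coverage_bound_independence_le_2[OF assms] by linarith
qed

section \<open>The chromatic bound\<close>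

lemma chromatic_number_bound_step:
  fixes d :: int
  assumes "finite X" "S \<subseteq> X" "I \<subseteq> X" "independent I E" "C \<subseteq> I" "C \<subseteq> S"
    and "chromatic_number (S - C) E + 1 \<le> chromatic_number S E"
    and "4 * int (chromatic_number (X - I) E) \<le> 2 * int (clique_number (X - I) E)
      + int (card (X - I)) + (d - 1) + 1 + 3 * int (chromatic_number (S - I) E) - int (card (S - I))"
  shows "4 * int (chromatic_number X E)
    \<le> 2 * int (clique_number X E) + int (card X) + d + 1 + 3 * int (chromatic_number S E) - int (card S)"
proof -
  have "finite I" "finite S" using assms(1-3) finite_subset by auto
  have "chromatic_number X E \<le> chromatic_number (X - I) E + 1"
    using chromatic_number_Diff_independent[OF assms(1,4)] .
  moreover have "clique_number (X - I) E \<le> clique_number X E"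
    using clique_number_mono[OF assms(1)] by blast
  moreover have "card (X - I) + card I = card X"
    using card_Diff_subset[OF \<open>finite I\<close> assms(3)] card_mono[OF assms(1,3)] by simp
  moreover have "chromatic_number (S - I) E \<le> chromatic_number (S - C) E"
    using chromatic_number_mono[OF _ Diff_mono[OF order_refl assms(5)]] \<open>finite S\<close> by blast
  moreover have "card (S - I) + card (S \<inter> I) = card S"
    using card_Diff_subset_Int[of S I] card_mono[of S "S \<inter> I"] \<open>finite S\<close> by auto
  moreover have "card (S \<inter> I) \<le> card I" using \<open>finite I\<close> by (intro card_mono) auto
  ultimately show ?thesis using assms(7,8) by linarith
qed

lemma degree_lowering_colour_class:
  assumes "finite X" "T \<subseteq> X" "T \<noteq> {}"
  obtains C I where "C \<subseteq> T" "C \<subseteq> I" "I \<subseteq> X" "I \<noteq> {}" "independent I E"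
    "chromatic_number (T - C) E + 1 \<le> chromatic_number T E"
    "\<forall>x\<in>X - I. degree (X - I) E x + 1 \<le> degree X E x"
proof -
  have "finite T" using assms(1,2) finite_subset by blast
  obtain C where C: "C \<subseteq> T" "C \<noteq> {}" "independent C E"
    "chromatic_number (T - C) E + 1 \<le> chromatic_number T E"
    using chromatic_number_remove_colour_class[OF \<open>finite T\<close> assms(3)] by blast
  obtain I where I: "C \<subseteq> I" "I \<subseteq> X" "independent I E" "\<forall>x\<in>X - I. \<exists>y\<in>I. E x y"
    using independent_extend_maximal[OF assms(1) _ C(3)] C(1) assms(2) by blast
  have "\<forall>x\<in>X - I. degree (X - I) E x + 1 \<le> degree X E x"
  proof
    fix x assume "x \<in> X - I"
    then obtain y where "y \<in> I" "E x y" using I(4) by blast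
    then show "degree (X - I) E x + 1 \<le> degree X E x"
      by (rule degree_Diff_neighbour[OF assms(1) I(2)])
  qed
  moreover have "I \<noteq> {}" using C(2) I(1) by blast
  ultimately show ?thesis using that C(1,4) I(1-3) by blast
qed

lemma chromatic_number_bound_empty_subset:
  fixes d :: int
  assumes "finite X" "X \<noteq> {}" "\<forall>v\<in>X. int (degree X E v) \<le> d"
    and nonempty: "\<And>T. T \<subseteq> X \<Longrightarrow> T \<noteq> {} \<Longrightarrow> 4 * int (chromatic_number X E)
      \<le> 2 * int (clique_number X E) + int (card X) + d + 1 + 3 * int (chromatic_number T E) - int (card T)"
  shows "4 * int (chromatic_number X E) \<le> 2 * int (clique_number X E) + int (card X) + d + 1"
proof (cases "\<forall>T\<subseteq>X. independent T E \<longrightarrow> card T \<le> 2")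
  case True
  obtain v where "v \<in> X" "max_degree X E = degree X E v"
    using max_degree_attained[OF assms(1,2)] .
  then have "int (max_degree X E) \<le> d" using assms(3) by simp
  moreover have "int (4 * chromatic_number X E)
      \<le> int (2 * clique_number X E + card X + max_degree X E + 1)"
    using chromatic_number_bound_independence_le_2[OF assms(1) True] by (simp only: of_nat_le_iff)
  ultimately show ?thesis by simp
next
  case False
  then obtain T where T: "T \<subseteq> X" "independent T E" "\<not> card T \<le> 2" by blast
  then have "3 \<le> card T" by linarith
  then obtain T' where T': "T' \<subseteq> T" "card T' = 3" "finite T'"
    by (rule obtain_subset_with_card_n)
  have "independent T' E" using T(2) T'(1) unfolding independent_def by blast
  then have "chromatic_number T' E \<le> 1" by (rule chromatic_number_independent)
  moreover have "T' \<subseteq> X" "T' \<noteq> {}" using T(1) T' by auto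
  ultimately show ?thesis using nonempty[of T'] T'(2) by simp
qed

text \<open>The bound d can be -1 only for the empty graph, which the induction reaches when a
  removed independent set exhausts X.\<close>

lemma chromatic_number_bound:
  fixes d :: int
  assumes "finite X" "S \<subseteq> X" "\<forall>v\<in>X. int (degree X E v) \<le> d" "-1 \<le> d"
  shows "4 * int (chromatic_number X E)
    \<le> 2 * int (clique_number X E) + int (card X) + d + 1 + 3 * int (chromatic_number S E) - int (card S)"
  using assms
proof (induction "card X" arbitrary: X S d rule: less_induct)
  case less
  note fin = less.prems(1) and deg = less.prems(3)
  show ?case
  proof (cases "X = {}")
    case True
    then have "S = {}" using less.prems(2) by blast
    then show ?thesis using True less.prems(4) by (simp add: chromatic_number_empty)
  next
    case False
    then obtain x0 where "x0 \<in> X" by blast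
    then have "int (degree X E x0) \<le> d" using deg by blast
    then have "0 \<le> d" by linarith
    have nonempty: "4 * int (chromatic_number X E) \<le> 2 * int (clique_number X E) + int (card X) + d + 1
        + 3 * int (chromatic_number T E) - int (card T)" if T: "T \<subseteq> X" "T \<noteq> {}" for T
    proof -
      obtain C I where CI: "C \<subseteq> T" "C \<subseteq> I" "I \<subseteq> X" "I \<noteq> {}" "independent I E"
        "chromatic_number (T - C) E + 1 \<le> chromatic_number T E"
        and lowered: "\<forall>x\<in>X - I. degree (X - I) E x + 1 \<le> degree X E x"
        using degree_lowering_colour_class[OF fin T] by blast
      have "card (X - I) < card X" using fin CI(3,4) by (intro psubset_card_mono) auto
      moreover have "finite (X - I)" "T - I \<subseteq> X - I" using fin T(1) by auto
      moreover have "\<forall>x\<in>X - I. int (degree (X - I) E x) \<le> d - 1"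
      proof
        fix x assume "x \<in> X - I"
        then have "degree (X - I) E x + 1 \<le> degree X E x" "int (degree X E x) \<le> d"
          using lowered deg by auto
        then show "int (degree (X - I) E x) \<le> d - 1" by linarith
      qed
      moreover have "-1 \<le> d - 1" using \<open>0 \<le> d\<close> by simp
      ultimately have "4 * int (chromatic_number (X - I) E) \<le> 2 * int (clique_number (X - I) E)
        + int (card (X - I)) + (d - 1) + 1 + 3 * int (chromatic_number (T - I) E) - int (card (T - I))"
        by (rule less.hyps)
      then show ?thesis by (rule chromatic_number_bound_step[OF fin T(1) CI(3,5,2,1,6)])
    qed
    show ?thesis
    proof (cases "S = {}")
      case True
      then show ?thesis
        using chromatic_number_bound_empty_subset[OF fin False deg nonempty]
        by (simp add: chromatic_number_empty)
    qed (use nonempty less.prems(2) in blast)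
  qed
qed

lemma chromatic_number_bound_joined_part:
  assumes "finite V" "A \<subseteq> V" "B \<subseteq> V" "A \<inter> B = {}" "A \<noteq> {}" "\<forall>a\<in>A. \<forall>b\<in>B. E a b"
  shows "4 * int (chromatic_number A E) \<le> 2 * int (clique_number A E) + int (card A)
    + (int (max_degree V E) - int (card B)) + 1
    + 3 * int (chromatic_number (S \<inter> A) E) - int (card (S \<inter> A))"
proof (rule chromatic_number_bound)
  show "\<forall>a\<in>A. int (degree A E a) \<le> int (max_degree V E) - int (card B)"
  proof
    fix a assume "a \<in> A"
    then have "degree A E a + card B \<le> degree V E a" "degree V E a \<le> max_degree V E"
      using degree_join[OF assms(1-4)] degree_le_max_degree[OF assms(1)] assms(2,6) by auto
    then show "int (degree A E a) \<le> int (max_degree V E) - int (card B)" by linarith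
  qed
  then show "-1 \<le> int (max_degree V E) - int (card B)" using assms(5) by fastforce
qed (use assms(1,2) finite_subset in auto)

lemma chromatic_number_bound_join:
  assumes "finite V" "K \<subseteq> V" "A \<union> B = V - K" "A \<inter> B = {}" "A \<noteq> {}" "B \<noteq> {}"
    and join: "\<forall>a\<in>A. \<forall>b\<in>B. E a b" and "S \<subseteq> V - K"
  shows "4 * int (chromatic_number V E) \<le> 4 * int (chromatic_number K E) + 2 * int (clique_number V E)
    + 2 * int (max_degree V E) + 2 + 3 * int (chromatic_number S E) - int (card S)"
proof -
  have AV: "A \<subseteq> V" and BV: "B \<subseteq> V" using assms(3) by auto
  have fin: "finite A" "finite B" "finite K" using assms(1,2) AV BV by (auto intro: finite_subset)
  have "B \<inter> A = {}" "\<forall>b\<in>B. \<forall>a\<in>A. E b a" using assms(4) join symmetric by auto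
  note bounds = chromatic_number_bound_joined_part[OF assms(1) AV BV assms(4,5) join, of S]
    chromatic_number_bound_joined_part[OF assms(1) BV AV this(1) assms(6) this(2), of S]
  have "V = K \<union> (A \<union> B)" using assms(2,3) by blast
  then have "chromatic_number V E \<le> chromatic_number K E + chromatic_number (A \<union> B) E"
    using chromatic_number_Un[OF fin(3), of "A \<union> B"] fin by simp
  moreover have "chromatic_number (A \<union> B) E \<le> chromatic_number A E + chromatic_number B E"
    using chromatic_number_Un[OF fin(1,2)] .
  moreover have "clique_number A E + clique_number B E \<le> clique_number V E"
    using clique_number_join[OF fin(1,2) assms(4) join] clique_number_mono[OF assms(1), of "A \<union> B" E]
      AV BV by (meson Un_least order_trans)
  moreover have "S = (S \<inter> A) \<union> (S \<inter> B)" using assms(3,8) by blast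
  then have "chromatic_number (S \<inter> A) E + chromatic_number (S \<inter> B) E \<le> chromatic_number S E"
    "card S = card (S \<inter> A) + card (S \<inter> B)"
    using chromatic_number_join[of "S \<inter> A" "S \<inter> B"] join fin assms(4)
      card_Un_disjoint[of "S \<inter> A" "S \<inter> B"] by auto
  ultimately show ?thesis using bounds by linarith
qed

end

theorem proposition4:
  fixes V :: "'a set" and E :: "'a \<Rightarrow> 'a \<Rightarrow> bool" and K H :: "'a set"
  assumes "simple_graph V E"
    and "cut_set V (complement V E) K"
    and "H \<subseteq> V" and "H \<noteq> {}"
  shows "real (chromatic_number V E)
    \<le> (real (clique_number V E) + real (max_degree V E) + 1) / 2
       + (4 * real (chromatic_number K E) + 3 * real (chromatic_number (H - K) E)
          - real (card (H - K))) / 4"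
proof -
  interpret undirected E using assms(1) by unfold_locales (simp_all add: simple_graph_def)
  have fin: "finite V" using assms(1) by (simp add: simple_graph_def)
  have KV: "K \<subseteq> V" using assms(2) by (simp add: cut_set_def)
  obtain A B where AB: "A \<noteq> {}" "B \<noteq> {}" "A \<union> B = V - K" "A \<inter> B = {}"
    and no_coedge: "\<forall>a\<in>A. \<forall>b\<in>B. \<not> complement V E a b"
    using assms(2) unfolding cut_set_def disconnected_def by blast
  have join: "\<forall>a\<in>A. \<forall>b\<in>B. E a b"
  proof (intro ballI)
    fix a b assume "a \<in> A" "b \<in> B"
    moreover have "a \<noteq> b" using \<open>a \<in> A\<close> \<open>b \<in> B\<close> AB(4) by blast
    ultimately show "E a b" using no_coedge AB(3) unfolding complement_def by blast
  qed
  have "H - K \<subseteq> V - K" using assms(3) by blast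
  from chromatic_number_bound_join[OF fin KV AB(3,4,1,2) join this]
  have "real_of_int (4 * int (chromatic_number V E)) \<le> real_of_int (4 * int (chromatic_number K E)
      + 2 * int (clique_number V E) + 2 * int (max_degree V E) + 2
      + 3 * int (chromatic_number (H - K) E) - int (card (H - K)))"
    by (simp only: of_int_le_iff)
  then show ?thesis by (simp add: field_simps)
qed

end
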